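(* Let $|N|=n$, let $i\in N$ and $S\subset N\setminus\{i\}$, and let $\chi_{(S,S\cup\{i\})}\in\ell^2(E)$ be the indicator function equal to $1$ on the edge $(S,S\cup\{i\})$ and $0$ on all other edges. If $u\in\ell^2(V)$ satisfies $\mathrm{d}u = P\chi_{(S,S\cup\{i\})}$ and $u(\emptyset)=0$, then $$u(N)=\frac{|S|!\,(n-1-|S|)!}{n!}.$$
   Context: Let $N$ be a finite set of players. The hypercube graph $G=(V,E)$ has vertex set $V=2^N$ and oriented edge set $E=\{(S,S\cup\{i\}) : i\in N,\ S\subset N\setminus\{i\}\}$. $\ell^2(V)$ is the space of real functions on $V$, and $\ell^2(E)$ is the space of real functions on $E$ with inner product $\langle f,g\rangle=\sum_{e\in E}f(e)g(e)$. The operator $\mathrm{d}\colon \ell^2(V)\to\ell^2(E)$ is $\mathrm{d}u(S,S\cup\{i\}) = u(S\cup\{i\})-u(S)$, with range $\mathcal{R}(\mathrm{d})$. $P\colon\ell^2(E)\to\ell^2(E)$ is the orthogonal projection onto $\mathcal{R}(\mathrm{d})$. *)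

theory Defs
  imports Complex_Main
begin

definition hedges :: "'a set \<Rightarrow> ('a set \<times> 'a set) set" where
  "hedges N = {(S, insert i S) | i S. i \<in> N \<and> S \<subseteq> N - {i}}"

text \<open>Elements of l2(E) are represented as functions on pairs of sets, zero outside E.
  The operator d: l2(V) to l2(E).\<close>
definition dgrad :: "'a set \<Rightarrow> ('a set \<Rightarrow> real) \<Rightarrow> ('a set \<times> 'a set \<Rightarrow> real)" where
  "dgrad N u = (\<lambda>e. if e \<in> hedges N then u (snd e) - u (fst e) else 0)"

definition innerE :: "'a set \<Rightarrow> ('a set \<times> 'a set \<Rightarrow> real) \<Rightarrow> ('a set \<times> 'a set \<Rightarrow> real) \<Rightarrow> real" where
  "innerE N f g = (\<Sum>e\<in>hedges N. f e * g e)"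

definition range_d :: "'a set \<Rightarrow> ('a set \<times> 'a set \<Rightarrow> real) set" where
  "range_d N = {dgrad N u | u. True}"

definition projP :: "'a set \<Rightarrow> ('a set \<times> 'a set \<Rightarrow> real) \<Rightarrow> ('a set \<times> 'a set \<Rightarrow> real)" where
  "projP N f = (THE g. g \<in> range_d N \<and> (\<forall>h\<in>range_d N. innerE N (\<lambda>e. f e - g e) h = 0))"

definition edge_ind :: "'a set \<times> 'a set \<Rightarrow> ('a set \<times> 'a set \<Rightarrow> real)" where
  "edge_ind e0 = (\<lambda>e. if e = e0 then 1 else 0)"

end

theory Submission imports Defs begin

text \<open>Write \<open>w k = k! (n - 1 - k)! / n!\<close> and \<open>\<phi> T = w 0 + \<dots> + w (|T| - 1)\<close>. Then \<open>d\<phi>\<close> equals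
  \<open>w |T|\<close> on every edge leaving \<open>T\<close>, and since \<open>k w (k - 1) = (n - k) w k\<close> for \<open>0 < k < n\<close>
  while \<open>n w 0 = n w (n - 1) = 1\<close>, the divergence of \<open>d\<phi>\<close> is the indicator of \<open>N\<close> minus that
  of \<open>{}\<close>. Summation by parts therefore gives \<open>\<langle>du, d\<phi>\<rangle> = u N - u {}\<close>. As \<open>\<chi> - P \<chi>\<close> is
  orthogonal to the gradient \<open>d\<phi>\<close>, the hypothesis \<open>du = P \<chi>\<close> yields
  \<open>u N = \<langle>\<chi>, d\<phi>\<rangle> = w |S|\<close>. That \<open>P \<chi>\<close> exists at all is seen by projecting onto the
  gradients of the finitely many point indicators one at a time.\<close>

type_synonym 'a edge_fun = "'a set \<times> 'a set \<Rightarrow> real"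

lemma finite_hedges:
  assumes "finite N"
  shows "finite (hedges N)"
proof -
  have "hedges N \<subseteq> Pow N \<times> Pow N" unfolding hedges_def by auto
  then show ?thesis using assms by (simp add: finite_subset)
qed

lemma hedges_eq_image_insert:
  "hedges N = (\<lambda>(T, j). (T, insert j T)) ` Sigma (Pow N) (\<lambda>T. N - T)"
  unfolding hedges_def by (auto simp: image_iff)

lemma hedges_eq_image_remove:
  "hedges N = (\<lambda>(T, j). (T - {j}, T)) ` Sigma (Pow N) (\<lambda>T. T)"
proof (intro equalityI subsetI)
  fix e assume "e \<in> hedges N"
  then obtain i S where "e = (S, insert i S)" "i \<in> N" "S \<subseteq> N - {i}"
    unfolding hedges_def by auto
  then show "e \<in> (\<lambda>(T, j). (T - {j}, T)) ` Sigma (Pow N) (\<lambda>T. T)"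
    by (intro image_eqI[of _ _ "(insert i S, i)"]) auto
next
  fix e assume "e \<in> (\<lambda>(T, j). (T - {j}, T)) ` Sigma (Pow N) (\<lambda>T. T)"
  then obtain T j where "e = (T - {j}, T)" "T \<subseteq> N" "j \<in> T" by auto
  then show "e \<in> hedges N"
    unfolding hedges_def by (intro CollectI exI[of _ j] exI[of _ "T - {j}"]) auto
qed

lemma sum_hedges_by_source:
  assumes "finite N"
  shows "sum F (hedges N) = (\<Sum>T\<in>Pow N. \<Sum>j\<in>N - T. F (T, insert j T))"
proof -
  have "inj_on (\<lambda>(T, j). (T, insert j T)) (Sigma (Pow N) (\<lambda>T. N - T))"
    by (auto simp: inj_on_def)
  then have "sum F (hedges N) = (\<Sum>(T, j)\<in>Sigma (Pow N) (\<lambda>T. N - T). F (T, insert j T))"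
    unfolding hedges_eq_image_insert by (simp add: sum.reindex split_def)
  then show ?thesis using assms by (simp add: sum.Sigma)
qed

lemma sum_hedges_by_target:
  assumes "finite N"
  shows "sum F (hedges N) = (\<Sum>T\<in>Pow N. \<Sum>j\<in>T. F (T - {j}, T))"
proof -
  have "inj_on (\<lambda>(T, j). (T - {j}, T)) (Sigma (Pow N) (\<lambda>T. T))"
    by (auto simp: inj_on_def)
  then have "sum F (hedges N) = (\<Sum>(T, j)\<in>Sigma (Pow N) (\<lambda>T. T). F (T - {j}, T))"
    unfolding hedges_eq_image_remove by (simp add: sum.reindex split_def)
  then show ?thesis using assms by (simp add: sum.Sigma finite_subset)
qed

lemma innerE_diff_left: "innerE N (\<lambda>x. f x - g x) h = innerE N f h - innerE N g h"
  unfolding innerE_def by (simp add: left_diff_distrib sum_subtractf)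

lemma innerE_bilinear:
  "innerE N (\<lambda>x. a x - c * b x) (\<lambda>x. a' x + d * b' x)
    = innerE N a a' - c * innerE N b a' + d * (innerE N a b' - c * innerE N b b')"
  unfolding innerE_def
  by (simp add: ring_distribs sum.distrib sum_subtractf sum_distrib_left mult_ac)

lemma innerE_eq_0_if_self_eq_0:
  assumes "innerE N w w = 0"
  shows "innerE N v w = 0"
proof (cases "finite (hedges N)")
  case True
  then have "\<forall>e\<in>hedges N. w e * w e = 0"
    using assms unfolding innerE_def by (subst sum_nonneg_eq_0_iff[symmetric]) auto
  then show ?thesis unfolding innerE_def by simp
qed (simp add: innerE_def)

lemma innerE_edge_ind:
  assumes "finite N" "e\<^sub>0 \<in> hedges N"
  shows "innerE N (edge_ind e\<^sub>0) g = g e\<^sub>0"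
proof -
  have "innerE N (edge_ind e\<^sub>0) g = (\<Sum>e\<in>hedges N. if e = e\<^sub>0 then g e\<^sub>0 else 0)"
    unfolding innerE_def edge_ind_def by (rule sum.cong) auto
  then show ?thesis using assms by (simp add: finite_hedges)
qed

lemma dgrad_lincomb:
  "dgrad N (\<lambda>X. u X + c * v X) = (\<lambda>e. dgrad N u e + c * dgrad N v e)"
  unfolding dgrad_def by (auto simp: algebra_simps)

definition admits_projection :: "'a set \<Rightarrow> 'a edge_fun set \<Rightarrow> bool" where
  "admits_projection N M \<longleftrightarrow> (\<forall>f. \<exists>g\<in>M. \<forall>h\<in>M. innerE N (\<lambda>e. f e - g e) h = 0)"

lemma admits_projection_zero: "admits_projection N {\<lambda>_. 0}"
  unfolding admits_projection_def innerE_def by simp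

text \<open>One Gram--Schmidt step: project \<open>v\<close> onto \<open>M\<close> and then onto the residual \<open>v - p\<close>.
  A residual of zero norm is harmless because it is orthogonal to everything.\<close>
lemma admits_projection_add_line:
  assumes proj: "admits_projection N M"
    and closed: "\<And>a b c. a \<in> M \<Longrightarrow> b \<in> M \<Longrightarrow> (\<lambda>x. a x + c * b x) \<in> M"
  shows "admits_projection N {\<lambda>x. m x + c * v x | m c. m \<in> M}"
  unfolding admits_projection_def
proof
  fix f
  obtain p where "p \<in> M" and p_orth: "\<forall>h\<in>M. innerE N (\<lambda>x. v x - p x) h = 0"
    using proj unfolding admits_projection_def by blast
  obtain g where "g \<in> M" and g_orth: "\<forall>h\<in>M. innerE N (\<lambda>x. f x - g x) h = 0"
    using proj unfolding admits_projection_def by blast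
  define w where "w = (\<lambda>x. v x - p x)"
  define r where "r = (\<lambda>x. f x - g x)"
  define t where "t = innerE N r w / innerE N w w"
  have t_solves: "innerE N r w - t * innerE N w w = 0"
  proof (cases "innerE N w w = 0")
    case True
    then show ?thesis using innerE_eq_0_if_self_eq_0[of N w r] by simp
  qed (simp add: t_def)
  define g' where "g' = (\<lambda>x. g x + (- t) * p x)"
  have "(\<lambda>x. g x + t * w x) = (\<lambda>x. g' x + t * v x)"
    by (simp add: g'_def w_def algebra_simps)
  moreover have "g' \<in> M" unfolding g'_def using closed \<open>g \<in> M\<close> \<open>p \<in> M\<close> .
  ultimately have in_span: "(\<lambda>x. g x + t * w x) \<in> {\<lambda>x. m x + c * v x | m c. m \<in> M}"
    by blast
  have orth: "innerE N (\<lambda>x. f x - (g x + t * w x)) h = 0"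
    if h_span: "h \<in> {\<lambda>x. m x + c * v x | m c. m \<in> M}" for h
  proof -
    obtain m d where "m \<in> M" and h: "h = (\<lambda>x. m x + d * v x)" using h_span by blast
    define m' where "m' = (\<lambda>x. m x + d * p x)"
    have "m' \<in> M" unfolding m'_def using closed \<open>m \<in> M\<close> \<open>p \<in> M\<close> .
    then have "innerE N r m' = 0" "innerE N w m' = 0"
      using g_orth p_orth by (auto simp: r_def w_def)
    moreover have "(\<lambda>x. f x - (g x + t * w x)) = (\<lambda>x. r x - t * w x)"
      by (simp add: r_def algebra_simps)
    moreover have "h = (\<lambda>x. m' x + d * w x)"
      by (simp add: h w_def m'_def algebra_simps)
    ultimately show ?thesis using t_solves by (simp add: innerE_bilinear)
  qed
  show "\<exists>g\<in>{\<lambda>x. m x + c * v x | m c. m \<in> M}.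
      \<forall>h\<in>{\<lambda>x. m x + c * v x | m c. m \<in> M}. innerE N (\<lambda>e. f e - g e) h = 0"
    by (intro bexI[OF _ in_span] ballI orth)
qed

definition grads_supported_in :: "'a set \<Rightarrow> 'a set set \<Rightarrow> 'a edge_fun set" where
  "grads_supported_in N W = {dgrad N u | u. \<forall>T. T \<notin> W \<longrightarrow> u T = 0}"

lemma grads_supported_in_empty: "grads_supported_in N {} = {\<lambda>_. 0}"
  unfolding grads_supported_in_def dgrad_def by (auto intro!: exI[of _ "\<lambda>_. 0"])

lemma grads_supported_in_closed:
  "a \<in> grads_supported_in N W \<Longrightarrow> b \<in> grads_supported_in N W
    \<Longrightarrow> (\<lambda>x. a x + c * b x) \<in> grads_supported_in N W"
  unfolding grads_supported_in_def by (auto simp: dgrad_lincomb[symmetric])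

lemma grads_supported_in_insert:
  "grads_supported_in N (insert T W)
    = {\<lambda>x. m x + c * dgrad N (\<lambda>X. if X = T then 1 else 0) x | m c. m \<in> grads_supported_in N W}"
  (is "_ = {\<lambda>x. m x + c * dgrad N ?\<delta> x | m c. m \<in> _}")
proof (intro equalityI subsetI)
  fix h assume "h \<in> grads_supported_in N (insert T W)"
  then obtain v where h: "h = dgrad N v" and v: "\<forall>X. X \<notin> insert T W \<longrightarrow> v X = 0"
    unfolding grads_supported_in_def by auto
  define v' where "v' = (\<lambda>X. v X + (- v T) * ?\<delta> X)"
  have "dgrad N v' \<in> grads_supported_in N W"
    unfolding grads_supported_in_def using v by (auto simp: v'_def)
  moreover have "h = (\<lambda>x. dgrad N v' x + v T * dgrad N ?\<delta> x)"
    unfolding h v'_def dgrad_lincomb by simp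
  ultimately show "h \<in> {\<lambda>x. m x + c * dgrad N ?\<delta> x | m c. m \<in> grads_supported_in N W}"
    by blast
next
  fix h assume "h \<in> {\<lambda>x. m x + c * dgrad N ?\<delta> x | m c. m \<in> grads_supported_in N W}"
  then obtain u c where u: "\<forall>X. X \<notin> W \<longrightarrow> u X = 0"
    and h: "h = (\<lambda>x. dgrad N u x + c * dgrad N ?\<delta> x)"
    unfolding grads_supported_in_def by auto
  then show "h \<in> grads_supported_in N (insert T W)"
    unfolding grads_supported_in_def dgrad_lincomb[symmetric]
    by (intro CollectI exI[of _ "\<lambda>X. u X + c * ?\<delta> X"]) auto
qed

lemma admits_projection_grads_supported_in:
  "finite W \<Longrightarrow> admits_projection N (grads_supported_in N W)"
proof (induction W rule: finite_induct)
  case empty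
  show ?case unfolding grads_supported_in_empty by (rule admits_projection_zero)
next
  case (insert T W)
  then show ?case
    unfolding grads_supported_in_insert
    by (intro admits_projection_add_line grads_supported_in_closed)
qed

lemma range_d_eq_grads_supported_in_Pow: "range_d N = grads_supported_in N (Pow N)"
proof (intro equalityI subsetI)
  fix g assume "g \<in> range_d N"
  then obtain u where u: "g = dgrad N u" unfolding range_d_def by auto
  have "g = dgrad N (\<lambda>X. if X \<in> Pow N then u X else 0)"
    unfolding u dgrad_def hedges_def by fastforce
  then show "g \<in> grads_supported_in N (Pow N)"
    unfolding grads_supported_in_def
    by (intro CollectI exI[of _ "\<lambda>X. if X \<in> Pow N then u X else 0"]) auto
qed (auto simp: range_d_def grads_supported_in_def)

lemma projP_orthogonal:
  assumes "finite N" "h \<in> range_d N"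
  shows "innerE N (\<lambda>e. f e - projP N f e) h = 0"
proof -
  let ?Q = "\<lambda>g. g \<in> range_d N \<and> (\<forall>h\<in>range_d N. innerE N (\<lambda>e. f e - g e) h = 0)"
  have "\<exists>g. ?Q g"
    using admits_projection_grads_supported_in[of "Pow N" N] assms(1)
    unfolding admits_projection_def range_d_eq_grads_supported_in_Pow by auto
  moreover have "g\<^sub>1 = g\<^sub>2" if Q1: "?Q g\<^sub>1" and Q2: "?Q g\<^sub>2" for g\<^sub>1 g\<^sub>2
  proof -
    obtain u\<^sub>1 u\<^sub>2 where g: "g\<^sub>1 = dgrad N u\<^sub>1" "g\<^sub>2 = dgrad N u\<^sub>2"
      using Q1 Q2 unfolding range_d_def by auto
    define \<Delta> where "\<Delta> = (\<lambda>e. g\<^sub>1 e - g\<^sub>2 e)"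
    have "\<Delta> = dgrad N (\<lambda>X. u\<^sub>1 X + (- 1) * u\<^sub>2 X)"
      unfolding \<Delta>_def g dgrad_lincomb by simp
    then have "\<Delta> \<in> range_d N" unfolding range_d_def by blast
    then have "innerE N (\<lambda>e. f e - g\<^sub>2 e) \<Delta> - innerE N (\<lambda>e. f e - g\<^sub>1 e) \<Delta> = 0"
      using Q1 Q2 by simp
    then have "innerE N \<Delta> \<Delta> = 0"
      unfolding \<Delta>_def innerE_diff_left[symmetric] by simp
    then have "\<forall>e\<in>hedges N. \<Delta> e * \<Delta> e = 0"
      using finite_hedges[OF assms(1)] unfolding innerE_def
      by (subst sum_nonneg_eq_0_iff[symmetric]) auto
    then show "g\<^sub>1 = g\<^sub>2"
      unfolding \<Delta>_def by (auto simp: g dgrad_def fun_eq_iff)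
  qed
  ultimately have "\<exists>!g. ?Q g" by (rule ex_ex1I)
  then have "?Q (projP N f)"
    unfolding projP_def by (rule theI')
  with assms(2) show ?thesis by blast
qed

lemma innerE_dgrad_summation_by_parts:
  assumes "finite N"
  shows "innerE N (dgrad N u) g
    = (\<Sum>T\<in>Pow N. u T * ((\<Sum>j\<in>T. g (T - {j}, T)) - (\<Sum>j\<in>N - T. g (T, insert j T))))"
proof -
  have "innerE N (dgrad N u) g = (\<Sum>e\<in>hedges N. u (snd e) * g e) - (\<Sum>e\<in>hedges N. u (fst e) * g e)"
    unfolding innerE_def dgrad_def by (simp add: left_diff_distrib sum_subtractf)
  also have "\<dots> = (\<Sum>T\<in>Pow N. \<Sum>j\<in>T. u T * g (T - {j}, T))
      - (\<Sum>T\<in>Pow N. \<Sum>j\<in>N - T. u T * g (T, insert j T))"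
    unfolding sum_hedges_by_target[OF assms, of "\<lambda>e. u (snd e) * g e"]
      sum_hedges_by_source[OF assms, of "\<lambda>e. u (fst e) * g e"] by simp
  finally show ?thesis by (simp add: sum_distrib_left right_diff_distrib sum_subtractf)
qed

lemma dgrad_card_potential:
  assumes "finite N" "e \<in> hedges N"
  shows "dgrad N (\<lambda>T. \<Sum>k<card T. c k) e = c (card (fst e))"
proof -
  obtain i S where e: "e = (S, insert i S)" "S \<subseteq> N - {i}"
    using assms(2) unfolding hedges_def by auto
  have "finite S" "i \<notin> S" using assms(1) e(2) by (auto intro: finite_subset)
  then have "card (insert i S) = Suc (card S)" by simp
  then show ?thesis using assms(2) unfolding dgrad_def e(1) by simp
qed

definition shapley_weight :: "nat \<Rightarrow> nat \<Rightarrow> real" where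
  "shapley_weight n k = fact k * fact (n - 1 - k) / fact n"

lemma shapley_weight_balance:
  assumes "0 < k" "k < n"
  shows "real k * shapley_weight n (k - 1) = real (n - k) * shapley_weight n k"
proof -
  have "real k * fact (k - 1) = fact k"
    using assms(1) by (simp add: fact_reduce[of k])
  moreover have "real (n - k) * fact (n - 1 - k) = fact (n - k)"
    using assms(2) by (simp add: fact_reduce[of "n - k"] diff_diff_left)
  moreover have "n - 1 - (k - 1) = n - k" using assms(1) by simp
  ultimately show ?thesis
    unfolding shapley_weight_def by (simp add: field_simps mult.left_commute)
qed

lemma shapley_weight_first: "0 < n \<Longrightarrow> real n * shapley_weight n 0 = 1"
  unfolding shapley_weight_def by (simp add: fact_reduce[of n])

lemma shapley_weight_last: "0 < n \<Longrightarrow> real n * shapley_weight n (n - 1) = 1"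
  unfolding shapley_weight_def by (simp add: fact_reduce[of n])

lemma shapley_weight_divergence:
  assumes "0 < n" "k \<le> n"
  shows "real k * shapley_weight n (k - 1) - real (n - k) * shapley_weight n k
    = (if k = n then 1 else 0) - (if k = 0 then 1 else 0)"
proof -
  consider "k = 0" | "k = n" | "0 < k" "k < n" using assms by linarith
  then show ?thesis
  proof cases
    case 1
    then show ?thesis using assms shapley_weight_first[OF assms(1)] by simp
  next
    case 2
    then show ?thesis using assms shapley_weight_last[OF assms(1)] by simp
  next
    case 3
    then show ?thesis using shapley_weight_balance[OF 3] by simp
  qed
qed

definition shapley_potential :: "nat \<Rightarrow> 'a set \<Rightarrow> real" where
  "shapley_potential n T = (\<Sum>k<card T. shapley_weight n k)"

lemma dgrad_shapley_potential:
  assumes "finite N" "e \<in> hedges N"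
  shows "dgrad N (shapley_potential n) e = shapley_weight n (card (fst e))"
proof -
  have potential: "shapley_potential n = (\<lambda>T. \<Sum>k<card T. shapley_weight n k)"
    by (simp add: fun_eq_iff shapley_potential_def)
  show ?thesis unfolding potential by (rule dgrad_card_potential[OF assms])
qed

lemma divergence_shapley_potential:
  assumes "finite N" "N \<noteq> {}" "T \<subseteq> N"
  shows "(\<Sum>j\<in>T. dgrad N (shapley_potential (card N)) (T - {j}, T))
      - (\<Sum>j\<in>N - T. dgrad N (shapley_potential (card N)) (T, insert j T))
    = (if T = N then 1 else 0) - (if T = {} then 1 else 0)"
proof -
  let ?n = "card N" and ?k = "card T" and ?w = "shapley_weight (card N)"
  have "finite T" using assms(1,3) finite_subset by blast
  have "(\<Sum>j\<in>T. dgrad N (shapley_potential ?n) (T - {j}, T)) = (\<Sum>j\<in>T. ?w (?k - 1))"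
  proof (rule sum.cong)
    fix j assume "j \<in> T"
    then have "(T - {j}, T) \<in> hedges N"
      using assms(3) unfolding hedges_eq_image_remove by force
    then show "dgrad N (shapley_potential ?n) (T - {j}, T) = ?w (?k - 1)"
      using \<open>j \<in> T\<close> \<open>finite T\<close> by (simp add: dgrad_shapley_potential[OF assms(1)])
  qed simp
  moreover have "(\<Sum>j\<in>N - T. dgrad N (shapley_potential ?n) (T, insert j T))
      = (\<Sum>j\<in>N - T. ?w ?k)"
  proof (rule sum.cong)
    fix j assume "j \<in> N - T"
    then have "(T, insert j T) \<in> hedges N"
      using assms(3) unfolding hedges_eq_image_insert by force
    then show "dgrad N (shapley_potential ?n) (T, insert j T) = ?w ?k"
      by (simp add: dgrad_shapley_potential[OF assms(1)])
  qed simp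
  moreover have "card (N - T) = ?n - ?k"
    using assms(1,3) by (simp add: card_Diff_subset finite_subset)
  moreover have "?n > 0" "?k \<le> ?n"
    using assms by (auto simp: card_gt_0_iff card_mono)
  moreover have "T = N \<longleftrightarrow> ?k = ?n" "T = {} \<longleftrightarrow> ?k = 0"
    using card_subset_eq[OF assms(1,3)] \<open>finite T\<close> by auto
  ultimately show ?thesis
    by (simp only: sum_constant shapley_weight_divergence)
qed

lemma innerE_dgrad_shapley_potential:
  assumes "finite N" "N \<noteq> {}"
  shows "innerE N (dgrad N u) (dgrad N (shapley_potential (card N))) = u N - u {}"
proof -
  have "innerE N (dgrad N u) (dgrad N (shapley_potential (card N)))
      = (\<Sum>T\<in>Pow N. (if T = N then u N else 0) - (if T = {} then u {} else 0))"
    unfolding innerE_dgrad_summation_by_parts[OF assms(1)]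
    by (rule sum.cong) (use divergence_shapley_potential[OF assms] in \<open>auto simp: right_diff_distrib\<close>)
  also have "\<dots> = u N - u {}"
    using assms(1) by (simp add: sum_subtractf)
  finally show ?thesis .
qed

theorem mainTheorem3:
  fixes N S :: "'a set" and i :: 'a and u :: "'a set \<Rightarrow> real"
  assumes "finite N" and "i \<in> N" and "S \<subseteq> N - {i}"
    and "dgrad N u = projP N (edge_ind (S, insert i S))"
    and "u {} = 0"
  shows "u N = fact (card S) * fact (card N - 1 - card S) / fact (card N)"
proof -
  let ?\<chi> = "edge_ind (S, insert i S)" and ?\<phi> = "shapley_potential (card N)"
  have edge: "(S, insert i S) \<in> hedges N" unfolding hedges_def using assms(2,3) by blast
  have "dgrad N ?\<phi> \<in> range_d N" unfolding range_d_def by blast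
  then have "innerE N (\<lambda>e. ?\<chi> e - dgrad N u e) (dgrad N ?\<phi>) = 0"
    using projP_orthogonal[OF assms(1)] assms(4) by simp
  moreover have "N \<noteq> {}" using assms(2) by blast
  ultimately have "u N - u {} = innerE N ?\<chi> (dgrad N ?\<phi>)"
    using innerE_dgrad_shapley_potential[OF assms(1)] by (simp add: innerE_diff_left)
  also have "\<dots> = shapley_weight (card N) (card S)"
    using innerE_edge_ind[OF assms(1) edge] dgrad_shapley_potential[OF assms(1) edge] by simp
  finally show ?thesis using assms(5) by (simp add: shapley_weight_def)
qed

end
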